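(* Let $G=(V,E)$ be a finite simple undirected graph and let $S$ be a total clique covering of $G$. Then there exists a coding sequence $\sigma$ of $G$ such that $S=S_\sigma$.
   Context: All graphs are finite, simple and undirected. A clique is a set of pairwise adjacent vertices; a set $S$ of cliques of $G$ is a total clique covering if every vertex lies in some member of $S$ and every edge has both endpoints in some member of $S$. For a finite sequence $\sigma=(a_1,\ldots,a_m)$ of positive integers, $G[\sigma]$ is the graph with vertices $v_1,\ldots,v_m$ ($a_i$ the label of $v_i$) where $v_iv_j$ is an edge iff $i\ne j$ and $\gcd(a_i,a_j)>1$. A coding sequence of a graph $G$ with $s\ge0$ isolated vertices: if $G$ has one vertex, $\sigma=(1)$; otherwise, with $G_1$ the graph obtained by deleting isolated vertices, take a non-decreasing finite sequence $\sigma_1$ of square-free integers $>1$ with $G_1\cong G[\sigma_1]$ and prefix it with $s$ entries equal to $1$; then $G\cong G[\sigma]$ with the isolated vertices labelled $1$. $\lambda(\sigma)$ is the lcm of the entries of $\sigma$ greater than $1$. Given a coding sequence $\sigma=(\lambda_1,\ldots,\lambda_m)$ of $G$ with vertices $v_i$ labelled $\lambda_i$, $s$ isolated vertices $v_1,\ldots,v_s$, and $p_1,\ldots,p_k$ the distinct prime factors of $\lambda(\sigma)$, the total clique covering corresponding to $\sigma$ is $S_\sigma=\{\{v_1\},\ldots,\{v_s\}\}\cup\{\{v_i : p_j\mid\lambda_i\} : j=1,\ldots,k\}$. *)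

theory Defs
  imports "HOL-Computational_Algebra.Computational_Algebra"
begin

definition simple_graph :: "'a set \<Rightarrow> ('a \<Rightarrow> 'a \<Rightarrow> bool) \<Rightarrow> bool" where
  "simple_graph V E \<longleftrightarrow> finite V \<and> (\<forall>u v. E u v \<longrightarrow> u \<in> V \<and> v \<in> V)
     \<and> (\<forall>u v. E u v \<longrightarrow> E v u) \<and> (\<forall>v. \<not> E v v)"

definition clique :: "'a set \<Rightarrow> ('a \<Rightarrow> 'a \<Rightarrow> bool) \<Rightarrow> 'a set \<Rightarrow> bool" where
  "clique V E C \<longleftrightarrow> C \<noteq> {} \<and> C \<subseteq> V \<and> (\<forall>x\<in>C. \<forall>y\<in>C. x \<noteq> y \<longrightarrow> E x y)"

definition total_clique_covering :: "'a set \<Rightarrow> ('a \<Rightarrow> 'a \<Rightarrow> bool) \<Rightarrow> 'a set set \<Rightarrow> bool" where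
  "total_clique_covering V E S \<longleftrightarrow> (\<forall>C\<in>S. clique V E C)
     \<and> (\<forall>v\<in>V. \<exists>C\<in>S. v \<in> C)
     \<and> (\<forall>u v. E u v \<longrightarrow> (\<exists>C\<in>S. u \<in> C \<and> v \<in> C))"

definition isolated :: "'a set \<Rightarrow> ('a \<Rightarrow> 'a \<Rightarrow> bool) \<Rightarrow> 'a \<Rightarrow> bool" where
  "isolated V E v \<longleftrightarrow> v \<in> V \<and> (\<forall>u. \<not> E v u)"

text \<open>The graph G[sigma]: vertices are the indices 0..<length sigma (0-based),
  i adjacent to j iff i \<noteq> j and gcd of the labels exceeds 1.\<close>
definition gcd_adj :: "nat list \<Rightarrow> nat \<Rightarrow> nat \<Rightarrow> bool" where
  "gcd_adj \<sigma> i j \<longleftrightarrow> i < length \<sigma> \<and> j < length \<sigma> \<and> i \<noteq> j \<and> gcd (\<sigma> ! i) (\<sigma> ! j) > 1"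

definition graph_iso :: "'a set \<Rightarrow> ('a \<Rightarrow> 'a \<Rightarrow> bool) \<Rightarrow> 'b set \<Rightarrow> ('b \<Rightarrow> 'b \<Rightarrow> bool)
    \<Rightarrow> ('a \<Rightarrow> 'b) \<Rightarrow> bool" where
  "graph_iso V E W F f \<longleftrightarrow> bij_betw f V W \<and> (\<forall>u\<in>V. \<forall>v\<in>V. E u v \<longleftrightarrow> F (f u) (f v))"

definition coding_seq :: "'a set \<Rightarrow> ('a \<Rightarrow> 'a \<Rightarrow> bool) \<Rightarrow> nat list \<Rightarrow> bool" where
  "coding_seq V E \<sigma> \<longleftrightarrow>
     (card V = 1 \<and> \<sigma> = [1]) \<or>
     (card V \<noteq> 1 \<and> (\<exists>\<sigma>1. \<sigma> = replicate (card {v. isolated V E v}) 1 @ \<sigma>1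
        \<and> sorted \<sigma>1 \<and> (\<forall>a\<in>set \<sigma>1. squarefree a \<and> a > 1)
        \<and> (\<exists>g. graph_iso (V - {v. isolated V E v}) E {0..<length \<sigma>1} (gcd_adj \<sigma>1) g)))"

definition lam :: "nat list \<Rightarrow> nat" where
  "lam \<sigma> = Lcm {a \<in> set \<sigma>. a > 1}"

text \<open>S_sigma, on the vertex set 0..<length sigma of G[sigma]: the singletons of
  the vertices labelled 1 (the isolated vertices v_1..v_s), and for each prime
  p dividing lambda(sigma) the set of vertices whose label p divides.\<close>
definition S_sigma :: "nat list \<Rightarrow> nat set set" where
  "S_sigma \<sigma> = {{i} | i. i < length \<sigma> \<and> \<sigma> ! i = 1}
     \<union> {{i. i < length \<sigma> \<and> p dvd \<sigma> ! i} | p. prime p \<and> p dvd lam \<sigma>}"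

end

theory Submission
  imports Defs
begin

text \<open>Give every clique of S that contains no isolated vertex its own prime and label each vertex
  by the product of the primes of the cliques through it, so that isolated vertices get the empty
  product 1. Two distinct vertices then share a prime iff some clique of S contains both, i.e. iff
  they are adjacent, and the vertices divisible by the prime of a clique C are exactly those of C.
  Listing the isolated vertices first and the others by increasing label gives a coding sequence
  whose prime cliques are the images of the members of S; the remaining members of S are the
  singletons of the isolated vertices.\<close>

subsection \<open>Labelling by products of distinct primes\<close>

lemma obtain_inj_on_primes:
  assumes "finite A"
  obtains P :: "'a \<Rightarrow> nat" where "inj_on P A" and "\<And>x. x \<in> A \<Longrightarrow> prime (P x)"
proof -
  obtain B where B: "finite B" "card B = card A" "B \<subseteq> {p::nat. prime p}"
    using infinite_arbitrarily_large[OF primes_infinite] by blast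
  then obtain P where "inj_on P A" "P ` A \<subseteq> B"
    using inj_on_iff_card_le[OF assms B(1)] by auto
  with B(3) that show ?thesis by blast
qed

definition prime_label :: "'a set set \<Rightarrow> ('a set \<Rightarrow> nat) \<Rightarrow> 'a \<Rightarrow> nat" where
  "prime_label S P v = (\<Prod>C\<in>{C\<in>S. v \<in> C}. P C)"

context
  fixes S :: "'a set set" and P :: "'a set \<Rightarrow> nat"
  assumes S_finite: "finite S" and P_inj: "inj_on P S"
    and P_prime: "\<And>C. C \<in> S \<Longrightarrow> prime (P C)"
begin

lemma prime_dvd_prime_label_iff:
  assumes "prime q"
  shows "q dvd prime_label S P v \<longleftrightarrow> (\<exists>C\<in>S. v \<in> C \<and> q = P C)"
proof -
  have "q dvd prime_label S P v \<longleftrightarrow> (\<exists>C\<in>{C\<in>S. v \<in> C}. q dvd P C)"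
    unfolding prime_label_def using S_finite by (intro prime_dvd_prod_iff assms) simp
  also have "\<dots> \<longleftrightarrow> (\<exists>C\<in>S. v \<in> C \<and> q = P C)"
    using P_prime assms primes_dvd_imp_eq by auto
  finally show ?thesis .
qed

lemma prime_label_pos: "0 < prime_label S P v"
  unfolding prime_label_def by (intro prod_pos) (simp add: P_prime prime_gt_0_nat)

lemma prime_label_eq_1_iff: "prime_label S P v = 1 \<longleftrightarrow> (\<forall>C\<in>S. v \<notin> C)"
proof
  assume label: "prime_label S P v = 1"
  show "\<forall>C\<in>S. v \<notin> C"
  proof (intro ballI notI)
    fix C assume "C \<in> S" "v \<in> C"
    then have "P C dvd prime_label S P v"
      using prime_dvd_prime_label_iff P_prime by blast
    with label P_prime[OF \<open>C \<in> S\<close>] show False by simp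
  qed
next
  assume "\<forall>C\<in>S. v \<notin> C"
  then have "{C\<in>S. v \<in> C} = {}" by blast
  then show "prime_label S P v = 1" unfolding prime_label_def by (simp only: prod.empty)
qed

lemma squarefree_prime_label: "squarefree (prime_label S P v)"
  unfolding prime_label_def
proof (rule squarefree_prod_coprime)
  fix C D assume "C \<in> {C\<in>S. v \<in> C}" "D \<in> {C\<in>S. v \<in> C}" "C \<noteq> D"
  with P_inj P_prime show "coprime (P C) (P D)"
    by (intro primes_coprime) (auto dest: inj_onD)
qed (use P_prime squarefree_prime in auto)

lemma one_less_gcd_prime_label_iff:
  "1 < gcd (prime_label S P u) (prime_label S P v) \<longleftrightarrow> (\<exists>C\<in>S. u \<in> C \<and> v \<in> C)"
proof
  assume "1 < gcd (prime_label S P u) (prime_label S P v)"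
  then obtain q :: nat where q: "prime q" "q dvd prime_label S P u" "q dvd prime_label S P v"
    using prime_factor_nat[of "gcd (prime_label S P u) (prime_label S P v)"] by auto
  then obtain C D where "C \<in> S" "u \<in> C" "q = P C" "D \<in> S" "v \<in> D" "q = P D"
    using prime_dvd_prime_label_iff by meson
  with P_inj show "\<exists>C\<in>S. u \<in> C \<and> v \<in> C" by (metis inj_onD)
next
  assume "\<exists>C\<in>S. u \<in> C \<and> v \<in> C"
  then obtain C where C: "C \<in> S" "u \<in> C" "v \<in> C" by blast
  then have "P C dvd gcd (prime_label S P u) (prime_label S P v)"
    using prime_dvd_prime_label_iff P_prime by auto
  then have "P C \<le> gcd (prime_label S P u) (prime_label S P v)"
    using prime_label_pos by (simp add: dvd_imp_le)
  with prime_gt_1_nat[OF P_prime[OF C(1)]] show "1 < gcd (prime_label S P u) (prime_label S P v)"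
    by linarith
qed

lemma prime_label_divisor_set:
  assumes "C \<in> S" "C \<subseteq> V"
  shows "{v\<in>V. P C dvd prime_label S P v} = C"
  using assms P_inj prime_dvd_prime_label_iff[OF P_prime[OF \<open>C \<in> S\<close>]]
  by (auto dest: inj_onD)

lemma prime_label_divisor_sets:
  assumes "\<And>C. C \<in> S \<Longrightarrow> C \<noteq> {} \<and> C \<subseteq> V"
  shows "{{v\<in>V. p dvd prime_label S P v} | p. prime p \<and> (\<exists>v\<in>V. p dvd prime_label S P v)} = S"
    (is "?D = S")
proof
  show "?D \<subseteq> S"
  proof
    fix X assume "X \<in> ?D"
    then obtain p v where "X = {v\<in>V. p dvd prime_label S P v}" "prime p" "p dvd prime_label S P v"
      by blast
    then obtain C where "C \<in> S" "X = {v\<in>V. P C dvd prime_label S P v}"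
      using prime_dvd_prime_label_iff by blast
    then show "X \<in> S" using prime_label_divisor_set assms by auto
  qed
next
  show "S \<subseteq> ?D"
  proof
    fix C assume C: "C \<in> S"
    then obtain v where "v \<in> C" "C \<subseteq> V" using assms by blast
    then have "P C dvd prime_label S P v" "v \<in> V"
      using C prime_dvd_prime_label_iff P_prime by auto
    with C P_prime prime_label_divisor_set[OF C \<open>C \<subseteq> V\<close>] show "C \<in> ?D" by blast
  qed
qed

end

subsection \<open>Total clique coverings\<close>

definition non_isolated_cliques :: "'a set \<Rightarrow> ('a \<Rightarrow> 'a \<Rightarrow> bool) \<Rightarrow> 'a set set \<Rightarrow> 'a set set" where
  "non_isolated_cliques V E S = {C\<in>S. \<forall>v\<in>C. \<not> isolated V E v}"

context
  fixes V :: "'a set" and E :: "'a \<Rightarrow> 'a \<Rightarrow> bool" and S :: "'a set set"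
  assumes graph: "simple_graph V E" and covering: "total_clique_covering V E S"
begin

lemma covering_clique: "C \<in> S \<Longrightarrow> C \<noteq> {} \<and> C \<subseteq> V"
  using covering unfolding total_clique_covering_def clique_def by blast

lemma covering_clique_adjacent: "C \<in> S \<Longrightarrow> u \<in> C \<Longrightarrow> v \<in> C \<Longrightarrow> u \<noteq> v \<Longrightarrow> E u v"
  using covering unfolding total_clique_covering_def clique_def by blast

lemma covering_vertex: "v \<in> V \<Longrightarrow> \<exists>C\<in>S. v \<in> C"
  using covering unfolding total_clique_covering_def by blast

lemma covering_edge: "E u v \<Longrightarrow> \<exists>C\<in>S. u \<in> C \<and> v \<in> C"
  using covering unfolding total_clique_covering_def by blast

lemma covering_clique_isolated_eq:
  assumes "C \<in> S" "v \<in> C" "isolated V E v"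
  shows "C = {v}"
  using assms covering_clique_adjacent unfolding isolated_def by blast

lemma covering_clique_non_isolated:
  assumes "C \<in> S" "v \<in> C" "\<not> isolated V E v"
  shows "C \<in> non_isolated_cliques V E S"
  using assms covering_clique_isolated_eq unfolding non_isolated_cliques_def by blast

lemma finite_non_isolated_cliques: "finite (non_isolated_cliques V E S)"
proof -
  have "S \<subseteq> Pow V" using covering_clique by blast
  moreover have "finite V" using graph unfolding simple_graph_def by blast
  ultimately show ?thesis unfolding non_isolated_cliques_def by (simp add: finite_subset)
qed

lemma covering_eq_isolated_singletons_Un:
  "S = {{v} | v. isolated V E v} \<union> non_isolated_cliques V E S"
proof (intro equalityI subsetI)
  fix C assume C: "C \<in> S"
  show "C \<in> {{v} | v. isolated V E v} \<union> non_isolated_cliques V E S"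
  proof (cases "\<exists>v\<in>C. isolated V E v")
    case True
    then obtain v where "v \<in> C" "isolated V E v" by blast
    with C have "C = {v}" by (rule covering_clique_isolated_eq)
    with \<open>isolated V E v\<close> show ?thesis by blast
  next
    case False
    with C show ?thesis unfolding non_isolated_cliques_def by blast
  qed
next
  have "{v} \<in> S" if isolated: "isolated V E v" for v
  proof -
    obtain D where "D \<in> S" "v \<in> D"
      using isolated covering_vertex unfolding isolated_def by blast
    moreover from this isolated have "D = {v}" by (rule covering_clique_isolated_eq)
    ultimately show ?thesis by simp
  qed
  then show "C \<in> S" if "C \<in> {{v} | v. isolated V E v} \<union> non_isolated_cliques V E S" for C
    using that unfolding non_isolated_cliques_def by blast
qed

lemma isolated_iff_not_in_non_isolated_clique:
  assumes "v \<in> V"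
  shows "isolated V E v \<longleftrightarrow> (\<forall>C\<in>non_isolated_cliques V E S. v \<notin> C)"
proof -
  have "\<exists>C\<in>non_isolated_cliques V E S. v \<in> C" if nonisolated: "\<not> isolated V E v"
  proof -
    obtain u where "E v u" using assms nonisolated unfolding isolated_def by blast
    then obtain C where "C \<in> S" "v \<in> C" using covering_edge by blast
    with nonisolated show ?thesis using covering_clique_non_isolated by blast
  qed
  then show ?thesis unfolding non_isolated_cliques_def by blast
qed

lemma adjacent_iff_in_non_isolated_clique:
  "E u v \<longleftrightarrow> u \<noteq> v \<and> (\<exists>C\<in>non_isolated_cliques V E S. u \<in> C \<and> v \<in> C)"
proof
  assume "E u v"
  then obtain C where "C \<in> S" "u \<in> C" "v \<in> C" using covering_edge by blast
  moreover have "\<not> isolated V E u" "u \<noteq> v"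
    using \<open>E u v\<close> graph unfolding isolated_def simple_graph_def by blast+
  ultimately show "u \<noteq> v \<and> (\<exists>C\<in>non_isolated_cliques V E S. u \<in> C \<and> v \<in> C)"
    using covering_clique_non_isolated by blast
next
  assume "u \<noteq> v \<and> (\<exists>C\<in>non_isolated_cliques V E S. u \<in> C \<and> v \<in> C)"
  then show "E u v" using covering_clique_adjacent unfolding non_isolated_cliques_def by blast
qed

lemma obtain_clique_labelling:
  obtains L :: "'a \<Rightarrow> nat" where
    "\<And>v. squarefree (L v)" and "\<And>v. L v \<noteq> 0"
    and "\<And>v. v \<in> V \<Longrightarrow> L v = 1 \<longleftrightarrow> isolated V E v"
    and "\<And>u v. E u v \<longleftrightarrow> u \<noteq> v \<and> 1 < gcd (L u) (L v)"
    and "S = {{v} | v. v \<in> V \<and> L v = 1} \<union> {{v\<in>V. p dvd L v} | p. prime p \<and> (\<exists>v\<in>V. p dvd L v)}"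
proof -
  define S' where "S' = non_isolated_cliques V E S"
  have "finite S'" unfolding S'_def by (rule finite_non_isolated_cliques)
  then obtain P :: "'a set \<Rightarrow> nat" where P: "inj_on P S'" "\<And>C. C \<in> S' \<Longrightarrow> prime (P C)"
    using obtain_inj_on_primes by blast
  define L where "L = prime_label S' P"
  have label_eq_1_iff: "L v = 1 \<longleftrightarrow> isolated V E v" if "v \<in> V" for v
  proof -
    have "L v = 1 \<longleftrightarrow> (\<forall>C\<in>S'. v \<notin> C)"
      unfolding L_def by (rule prime_label_eq_1_iff[OF \<open>finite S'\<close> P])
    also have "\<dots> \<longleftrightarrow> isolated V E v"
      unfolding S'_def by (rule isolated_iff_not_in_non_isolated_clique[OF that, symmetric])
    finally show ?thesis .
  qed
  have adjacent: "E u v \<longleftrightarrow> u \<noteq> v \<and> 1 < gcd (L u) (L v)" for u v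
  proof -
    have "E u v \<longleftrightarrow> u \<noteq> v \<and> (\<exists>C\<in>S'. u \<in> C \<and> v \<in> C)"
      unfolding S'_def by (rule adjacent_iff_in_non_isolated_clique)
    also have "\<dots> \<longleftrightarrow> u \<noteq> v \<and> 1 < gcd (L u) (L v)"
      using one_less_gcd_prime_label_iff[OF \<open>finite S'\<close> P] unfolding L_def by blast
    finally show ?thesis .
  qed
  have "isolated V E v \<longleftrightarrow> v \<in> V \<and> L v = 1" for v
    using label_eq_1_iff unfolding isolated_def by blast
  then have "S = {{v} | v. v \<in> V \<and> L v = 1} \<union> S'"
    using covering_eq_isolated_singletons_Un unfolding S'_def by simp
  also have "S' = {{v\<in>V. p dvd L v} | p. prime p \<and> (\<exists>v\<in>V. p dvd L v)}"
    unfolding L_def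
    by (rule prime_label_divisor_sets[OF \<open>finite S'\<close> P, symmetric])
      (use covering_clique in \<open>auto simp: S'_def non_isolated_cliques_def\<close>)
  finally have "S = {{v} | v. v \<in> V \<and> L v = 1} \<union> {{v\<in>V. p dvd L v} | p. prime p \<and> (\<exists>v\<in>V. p dvd L v)}" .
  moreover have "squarefree (L v)" "L v \<noteq> 0" for v
    unfolding L_def using squarefree_prime_label[OF \<open>finite S'\<close> P] prime_label_pos[OF \<open>finite S'\<close> P]
    by simp_all
  ultimately show thesis using that label_eq_1_iff adjacent by blast
qed

end

subsection \<open>Coding sequences from vertex labellings\<close>

definition position :: "'a list \<Rightarrow> 'a \<Rightarrow> nat" where
  "position xs = inv_into {..<length xs} ((!) xs)"

lemma nth_position: "x \<in> set xs \<Longrightarrow> xs ! position xs x = x"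
  unfolding position_def by (rule f_inv_into_f) (auto simp: in_set_conv_nth)

lemma position_less:
  assumes "x \<in> set xs"
  shows "position xs x < length xs"
proof -
  have "x \<in> (!) xs ` {..<length xs}" using assms by (auto simp: in_set_conv_nth)
  then show ?thesis unfolding position_def using inv_into_into lessThan_iff by metis
qed

lemma position_nth: "distinct xs \<Longrightarrow> i < length xs \<Longrightarrow> position xs (xs ! i) = i"
  unfolding position_def by (simp add: inj_on_nth)

lemma bij_betw_position: "distinct xs \<Longrightarrow> bij_betw (position xs) (set xs) {0..<length xs}"
  unfolding position_def atLeast0LessThan
  by (rule bij_betw_inv_into) (simp add: bij_betw_nth)

lemma Collect_nth_eq_image_position:
  assumes "distinct xs"
  shows "{i. i < length xs \<and> Q (xs ! i)} = position xs ` {x\<in>set xs. Q x}"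
proof (intro equalityI subsetI)
  fix i assume "i \<in> {i. i < length xs \<and> Q (xs ! i)}"
  with assms show "i \<in> position xs ` {x\<in>set xs. Q x}"
    by (auto simp: position_nth intro!: image_eqI[of i _ "xs ! i"])
qed (auto simp: position_less nth_position)

lemma graph_iso_position:
  assumes "distinct xs"
    and adjacent: "\<And>u v. u \<in> set xs \<Longrightarrow> v \<in> set xs \<Longrightarrow> F u v \<longleftrightarrow> u \<noteq> v \<and> 1 < gcd (L u) (L v)"
  shows "graph_iso (set xs) F {0..<length (map L xs)} (gcd_adj (map L xs)) (position xs)"
  unfolding graph_iso_def
proof (intro conjI ballI)
  show "bij_betw (position xs) (set xs) {0..<length (map L xs)}"
    using bij_betw_position[OF assms(1)] by simp
next
  fix u v assume "u \<in> set xs" "v \<in> set xs"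
  moreover from this have "position xs u = position xs v \<longleftrightarrow> u = v"
    by (metis nth_position)
  ultimately show "F u v \<longleftrightarrow> gcd_adj (map L xs) (position xs u) (position xs v)"
    unfolding gcd_adj_def by (simp add: adjacent position_less nth_position)
qed

lemma prime_dvd_lam_iff:
  assumes "prime p"
  shows "p dvd lam \<sigma> \<longleftrightarrow> (\<exists>a\<in>set \<sigma>. a \<noteq> 0 \<and> p dvd a)"
proof -
  define A where "A = {a \<in> set \<sigma>. a > 1}"
  have "finite A" unfolding A_def by simp
  have "p dvd Lcm A \<longleftrightarrow> (\<exists>a\<in>A. p dvd a)"
  proof
    assume "p dvd Lcm A"
    moreover have "Lcm A dvd \<Prod>A" by (rule Lcm_least) (use \<open>finite A\<close> dvd_prodI in blast)
    ultimately have "p dvd \<Prod>A" by (rule dvd_trans)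
    then show "\<exists>a\<in>A. p dvd a"
      using prime_dvd_prod_iff[OF \<open>finite A\<close> assms] by simp
  next
    assume "\<exists>a\<in>A. p dvd a"
    then show "p dvd Lcm A" by (meson dvd_Lcm dvd_trans)
  qed
  moreover have "(\<exists>a\<in>A. p dvd a) \<longleftrightarrow> (\<exists>a\<in>set \<sigma>. a \<noteq> 0 \<and> p dvd a)"
  proof -
    have "1 < a \<longleftrightarrow> a \<noteq> 0" if "p dvd a" for a :: nat
      using that assms by (cases "a = 1") auto
    then show ?thesis unfolding A_def by blast
  qed
  ultimately show ?thesis unfolding lam_def A_def by simp
qed

lemma S_sigma_map:
  assumes "distinct xs" and nonzero: "\<And>x. x \<in> set xs \<Longrightarrow> L x \<noteq> 0"
  shows "S_sigma (map L xs) = (\<lambda>C. position xs ` C) `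
           ({{x} | x. x \<in> set xs \<and> L x = 1}
            \<union> {{x\<in>set xs. p dvd L x} | p. prime p \<and> (\<exists>x\<in>set xs. p dvd L x)})"
proof -
  have Collect_map: "{i. i < length (map L xs) \<and> Q (map L xs ! i)} = position xs ` {x\<in>set xs. Q (L x)}"
    for Q using Collect_nth_eq_image_position[OF assms(1), of "\<lambda>x. Q (L x)"] by (simp cong: conj_cong)
  have singletons: "{{i} | i. i < length (map L xs) \<and> map L xs ! i = 1}
      = (\<lambda>C. position xs ` C) ` {{x} | x. x \<in> set xs \<and> L x = 1}"
    unfolding setcompr_eq_image Collect_map[of "\<lambda>a. a = 1"] image_image by simp
  have "p dvd lam (map L xs) \<longleftrightarrow> (\<exists>x\<in>set xs. p dvd L x)" if "prime p" for p
    using prime_dvd_lam_iff[OF that] nonzero by auto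
  then have "{p. prime p \<and> p dvd lam (map L xs)} = {p. prime p \<and> (\<exists>x\<in>set xs. p dvd L x)}"
    by blast
  then have divisor_sets: "{{i. i < length (map L xs) \<and> p dvd map L xs ! i} | p. prime p \<and> p dvd lam (map L xs)}
      = (\<lambda>C. position xs ` C) ` {{x\<in>set xs. p dvd L x} | p. prime p \<and> (\<exists>x\<in>set xs. p dvd L x)}"
    unfolding setcompr_eq_image Collect_map image_image by simp
  show ?thesis unfolding S_sigma_def singletons divisor_sets image_Un ..
qed

lemma obtain_coding_seq_map:
  assumes graph: "simple_graph V E"
    and squarefree: "\<And>v. v \<in> V \<Longrightarrow> squarefree (L v)"
    and nonzero: "\<And>v. v \<in> V \<Longrightarrow> L v \<noteq> 0"
    and label_eq_1_iff: "\<And>v. v \<in> V \<Longrightarrow> L v = 1 \<longleftrightarrow> isolated V E v"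
    and adjacent: "\<And>u v. u \<in> V \<Longrightarrow> v \<in> V \<Longrightarrow> E u v \<longleftrightarrow> u \<noteq> v \<and> 1 < gcd (L u) (L v)"
  obtains xs where "distinct xs" "set xs = V" "coding_seq V E (map L xs)"
proof -
  define I where "I = {v. isolated V E v}"
  have "finite V" using graph unfolding simple_graph_def by blast
  have "I \<subseteq> V" unfolding I_def isolated_def by blast
  obtain ys where ys: "distinct ys" "set ys = I"
    using finite_distinct_list[OF finite_subset[OF \<open>I \<subseteq> V\<close> \<open>finite V\<close>]] by blast
  obtain zs where zs: "distinct zs" "set zs = V - I"
    using finite_distinct_list[of "V - I"] \<open>finite V\<close> by blast
  define ns where "ns = sort_key L zs"
  have ns: "distinct ns" "set ns = V - I" "sorted (map L ns)"
    unfolding ns_def using zs by auto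
  define xs where "xs = ys @ ns"
  have xs: "distinct xs" "set xs = V"
    unfolding xs_def using ys ns \<open>I \<subseteq> V\<close> by auto
  have "coding_seq V E (map L xs)"
  proof (cases "card V = 1")
    case True
    then obtain v where V: "V = {v}" by (rule card_1_singletonE)
    then have "isolated V E v" using graph unfolding isolated_def simple_graph_def by blast
    moreover have "xs = [v]"
    proof -
      have "length xs = 1" using xs True distinct_card[OF xs(1)] by simp
      then obtain x where "xs = [x]" by (auto simp: length_Suc_conv)
      with xs(2) V show ?thesis by simp
    qed
    ultimately show ?thesis using True V label_eq_1_iff unfolding coding_seq_def by simp
  next
    case False
    have "map L ys = replicate (card I) 1"
      using ys distinct_card[OF ys(1)] label_eq_1_iff \<open>I \<subseteq> V\<close> unfolding I_def
      by (intro replicate_eqI) auto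
    then have "map L xs = replicate (card {v. isolated V E v}) 1 @ map L ns"
      unfolding xs_def I_def by simp
    moreover have "squarefree a \<and> 1 < a" if a: "a \<in> set (map L ns)" for a
    proof -
      obtain v where "v \<in> V" "\<not> isolated V E v" "a = L v" using a ns(2) unfolding I_def by auto
      with squarefree nonzero label_eq_1_iff show ?thesis by (metis less_one nat_neq_iff)
    qed
    moreover have "graph_iso (V - {v. isolated V E v}) E {0..<length (map L ns)}
        (gcd_adj (map L ns)) (position ns)"
      using graph_iso_position[OF ns(1), of E L] ns(2) adjacent unfolding I_def by auto
    ultimately show ?thesis using False ns(3) unfolding coding_seq_def by blast
  qed
  with xs that show thesis by blast
qed

theorem lemma2:
  fixes V :: "'a set" and E :: "'a \<Rightarrow> 'a \<Rightarrow> bool" and S :: "'a set set"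
  assumes "simple_graph V E"
    and "total_clique_covering V E S"
  shows "\<exists>\<sigma> f. coding_seq V E \<sigma>
           \<and> graph_iso V E {0..<length \<sigma>} (gcd_adj \<sigma>) f
           \<and> (\<forall>v\<in>V. isolated V E v \<longleftrightarrow> \<sigma> ! f v = 1)
           \<and> (\<lambda>C. f ` C) ` S = S_sigma \<sigma>"
proof -
  obtain L :: "'a \<Rightarrow> nat" where squarefree: "\<And>v. squarefree (L v)" and nonzero: "\<And>v. L v \<noteq> 0"
    and label_eq_1_iff: "\<And>v. v \<in> V \<Longrightarrow> L v = 1 \<longleftrightarrow> isolated V E v"
    and adjacent: "\<And>u v. E u v \<longleftrightarrow> u \<noteq> v \<and> 1 < gcd (L u) (L v)"
    and S_eq: "S = {{v} | v. v \<in> V \<and> L v = 1}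
                 \<union> {{v\<in>V. p dvd L v} | p. prime p \<and> (\<exists>v\<in>V. p dvd L v)}"
    using obtain_clique_labelling[OF assms] by blast
  obtain xs where xs: "distinct xs" "set xs = V" "coding_seq V E (map L xs)"
    using obtain_coding_seq_map[OF assms(1)] squarefree nonzero label_eq_1_iff adjacent by blast
  have "graph_iso V E {0..<length (map L xs)} (gcd_adj (map L xs)) (position xs)"
    using graph_iso_position[OF xs(1), of E L] adjacent xs(2) by simp
  moreover have "\<forall>v\<in>V. isolated V E v \<longleftrightarrow> map L xs ! position xs v = 1"
    using label_eq_1_iff xs(2) by (simp add: position_less nth_position)
  moreover have "(\<lambda>C. position xs ` C) ` S = S_sigma (map L xs)"
    unfolding S_eq xs(2)[symmetric] using S_sigma_map[OF xs(1)] nonzero by simp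
  ultimately show ?thesis using xs(3) by blast
qed

end
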